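(* Let $X$ be a nonempty set. A rack structure $\rhd$ on $X$ is trivial (i.e. $x\rhd y=x$ for all $x,y\in X$) if and only if $(X,\rhd)$ acts faithfully on some nonempty set $M$ and the action satisfies $(m\cdot x)\cdot y=(m\cdot y)\cdot x$ for all $x,y\in X$, $m\in M$.
   Context: A rack is a set $X$ with a binary operation $\rhd$ such that each $x\mapsto x\rhd y$ is bijective and $(x\rhd y)\rhd z=(x\rhd z)\rhd(y\rhd z)$. A stabilizing family of $X$ is a finite family $(u_1,\ldots,u_s)$ with $(\cdots(x\rhd u_1)\cdots)\rhd u_s=x$ for all $x$. A rack action of $X$ on a set $M$ is a map $(m,x)\mapsto m\cdot x$ such that each $m\mapsto m\cdot x$ is a bijection, $(m\cdot x)\cdot y=(m\cdot y)\cdot(x\rhd y)$, and for every stabilizing family $(u_1,\ldots,u_s)$ and every cyclic shift $\sigma$ of $\{1,\ldots,s\}$, $(\cdots(m\cdot u_1)\cdots)\cdot u_s=(\cdots(m\cdot u_{\sigma(1)})\cdots)\cdot u_{\sigma(s)}$. The action is faithful if for each $m\in M$ the map $X\ni x\mapsto m\cdot x\in M$ is injective. *)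

theory Defs
  imports Main
begin

definition rack :: "'a set \<Rightarrow> ('a \<Rightarrow> 'a \<Rightarrow> 'a) \<Rightarrow> bool" where
  "rack X r \<longleftrightarrow>
     (\<forall>x\<in>X. \<forall>y\<in>X. r x y \<in> X) \<and>
     (\<forall>y\<in>X. bij_betw (\<lambda>x. r x y) X X) \<and>
     (\<forall>x\<in>X. \<forall>y\<in>X. \<forall>z\<in>X. r (r x y) z = r (r x z) (r y z))"

definition trivial_rack :: "'a set \<Rightarrow> ('a \<Rightarrow> 'a \<Rightarrow> 'a) \<Rightarrow> bool" where
  "trivial_rack X r \<longleftrightarrow> (\<forall>x\<in>X. \<forall>y\<in>X. r x y = x)"

definition stabilizing_family :: "'a set \<Rightarrow> ('a \<Rightarrow> 'a \<Rightarrow> 'a) \<Rightarrow> 'a list \<Rightarrow> bool" where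
  "stabilizing_family X r us \<longleftrightarrow> set us \<subseteq> X \<and> (\<forall>x\<in>X. foldl r x us = x)"

definition rack_action ::
  "'a set \<Rightarrow> ('a \<Rightarrow> 'a \<Rightarrow> 'a) \<Rightarrow> 'm set \<Rightarrow> ('m \<Rightarrow> 'a \<Rightarrow> 'm) \<Rightarrow> bool" where
  "rack_action X r M act \<longleftrightarrow>
     (\<forall>m\<in>M. \<forall>x\<in>X. act m x \<in> M) \<and>
     (\<forall>x\<in>X. bij_betw (\<lambda>m. act m x) M M) \<and>
     (\<forall>m\<in>M. \<forall>x\<in>X. \<forall>y\<in>X. act (act m x) y = act (act m y) (r x y)) \<and>
     (\<forall>us k. stabilizing_family X r us \<longrightarrow>
        (\<forall>m\<in>M. foldl act m us = foldl act m (rotate k us)))"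

definition faithful_action :: "'a set \<Rightarrow> 'm set \<Rightarrow> ('m \<Rightarrow> 'a \<Rightarrow> 'm) \<Rightarrow> bool" where
  "faithful_action X M act \<longleftrightarrow> (\<forall>m\<in>M. inj_on (\<lambda>x. act m x) X)"

definition commuting_action :: "'a set \<Rightarrow> 'm set \<Rightarrow> ('m \<Rightarrow> 'a \<Rightarrow> 'm) \<Rightarrow> bool" where
  "commuting_action X M act \<longleftrightarrow>
     (\<forall>m\<in>M. \<forall>x\<in>X. \<forall>y\<in>X. act (act m x) y = act (act m y) x)"

end

theory Submission
  imports Defs
begin

text \<open>A faithful action that commutes gives m \<cdot> y \<cdot> (x \<rhd> y) = m \<cdot> x \<cdot> y = m \<cdot> y \<cdot> x,
  and faithfulness at m \<cdot> y cancels to x \<rhd> y = x. Conversely, a trivial rack acts on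
  the integer-valued functions on X by raising the value at x by one; this action is
  faithful and commutative, and it is invariant under cyclic shifts of any family
  because the result only depends on how often each element occurs.\<close>

lemma trivial_rack_if_faithful_commuting_action:
  assumes "\<forall>x\<in>X. \<forall>y\<in>X. r x y \<in> X"
    and "M \<noteq> {}" and "rack_action X r M act"
    and "faithful_action X M act" and "commuting_action X M act"
  shows "trivial_rack X r"
  unfolding trivial_rack_def
proof (intro ballI)
  fix x y assume xy: "x \<in> X" "y \<in> X"
  obtain m where m: "m \<in> M" using assms(2) by blast
  have my: "act m y \<in> M" using assms(3) m xy by (simp add: rack_action_def)
  have "act (act m y) (r x y) = act (act m y) x"
    using assms(3,5) m xy unfolding rack_action_def commuting_action_def by metis
  then show "r x y = x"
    using assms(1,4) my xy unfolding faithful_action_def inj_on_def by blast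
qed

definition bump :: "('a \<Rightarrow> int) \<Rightarrow> 'a \<Rightarrow> 'a \<Rightarrow> int" where
  "bump m x = m(x := m x + 1)"

lemma bump_commute: "bump (bump m x) y = bump (bump m y) x"
  by (auto simp: bump_def fun_eq_iff)

lemma bij_bump: "bij (\<lambda>m. bump m x)"
  by (rule bij_betw_byWitness[where f' = "\<lambda>m. m(x := m x - 1)"]) (auto simp: bump_def)

lemma inj_bump: "inj (bump m)"
  by (auto simp: inj_def bump_def fun_eq_iff split: if_splits)

lemma foldl_bump: "foldl bump m us = (\<lambda>z. m z + int (count_list us z))"
  by (induction us arbitrary: m) (auto simp: bump_def)

lemma count_list_rotate1: "count_list (rotate1 xs) z = count_list xs z"
  by (cases xs) auto

lemma count_list_rotate: "count_list (rotate k xs) z = count_list xs z"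
  by (induction k) (simp_all add: rotate_Suc count_list_rotate1)

lemma foldl_bump_rotate: "foldl bump m (rotate k us) = foldl bump m us"
  by (simp add: foldl_bump count_list_rotate)

lemma rack_action_bump:
  assumes "trivial_rack X r"
  shows "rack_action X r UNIV bump"
  using assms bump_commute bij_bump
  unfolding rack_action_def trivial_rack_def by (auto simp: foldl_bump_rotate)

lemma faithful_action_bump: "faithful_action X UNIV bump"
  by (simp add: faithful_action_def inj_on_subset[OF inj_bump])

lemma commuting_action_bump: "commuting_action X UNIV bump"
  by (simp add: commuting_action_def bump_commute)

theorem mainTheorem18:
  fixes X :: "'a set" and r :: "'a \<Rightarrow> 'a \<Rightarrow> 'a"
  assumes "X \<noteq> {}" and "rack X r"
  shows "(trivial_rack X r \<longrightarrow>
           (\<exists>(M :: ('a \<Rightarrow> int) set) act. M \<noteq> {} \<and> rack_action X r M act \<and>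
               faithful_action X M act \<and> commuting_action X M act))
       \<and> (\<forall>(M :: 'm set) act. M \<noteq> {} \<and> rack_action X r M act \<and>
               faithful_action X M act \<and> commuting_action X M act
             \<longrightarrow> trivial_rack X r)"
proof (intro conjI impI allI)
  assume "trivial_rack X r"
  then show "\<exists>(M :: ('a \<Rightarrow> int) set) act. M \<noteq> {} \<and> rack_action X r M act \<and>
               faithful_action X M act \<and> commuting_action X M act"
    by (intro exI[of _ UNIV] exI[of _ bump])
      (simp add: rack_action_bump faithful_action_bump commuting_action_bump)
next
  fix M :: "'m set" and act
  assume "M \<noteq> {} \<and> rack_action X r M act \<and> faithful_action X M act \<and>
      commuting_action X M act"
  moreover have "\<forall>x\<in>X. \<forall>y\<in>X. r x y \<in> X"
    using assms(2) by (simp add: rack_def)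
  ultimately show "trivial_rack X r"
    using trivial_rack_if_faithful_commuting_action by metis
qed

end
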